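(* Let $\mathcal{P}$ satisfy properties (a)–(f) and let $(P(n,t))_{t=0}^{N}$ be the $\mathcal{P}$-constrained random graph process. Let $t_1=t_1(n),t_2=t_2(n)\in[N]$ and $\alpha=\alpha(n)>0$ be such that $\alpha\,(t_2-t_1)\to\infty$ and $t_2=o(\alpha n^2)$. (1) If whp $R(t_2)-R(t_1)\le \alpha(t_2-t_1)$, then whp $\mathrm{forb}(P(n,t_1))\le (1+o(1))\,\alpha N$. (2) If whp $R(t_2)-R(t_1)\ge \alpha(t_2-t_1)$, then whp $\mathrm{forb}(P(n,t_2))\ge (1+o(1))\,\alpha N$.
   Context: All graphs are vertex-labelled, simple and undirected. Let $\mathcal{P}$ be a class of graphs such that: (a) $\mathcal{P}$ is not the class of all graphs; (b) it contains all edgeless graphs; (c) it is closed under isomorphism; (d) it is closed under taking minors; (e) it is weakly addable, i.e. if $G\in\mathcal{P}$ and $u,v$ lie in different components of $G$ then $G+uv\in\mathcal{P}$; (f) if $G\in\mathcal{P}$ and $u,v$ are non-adjacent vertices in the same component of $G$ which is a tree, then $G+uv\in\mathcal{P}$. Let $N=\binom{n}{2}$. The $\mathcal{P}$-constrained random graph process: take a uniformly random ordering $e_1,\ldots,e_N$ of the edges of $K_n$; $P(n,0)$ is the empty graph on $[n]$; for $t\in[N]$, set $P(n,t)=P(n,t-1)+e_t$ if $P(n,t-1)+e_t\in\mathcal{P}$ ($e_t$ accepted), and $P(n,t)=P(n,t-1)$ otherwise ($e_t$ rejected). $R(t):=t-e(P(n,t))$ is the number of rejected edges up to step $t$. For $H\in\mathcal{P}$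 on vertex set $[n]$, an edge $e\in E(K_n)\setminus E(H)$ is forbidden in $H$ if $H+e\notin\mathcal{P}$; $\mathrm{forb}(H)$ is the number of such edges. "whp" means with probability tending to $1$ as $n\to\infty$. *)

theory Defs
  imports "HOL-Probability.Probability" "HOL-Combinatorics.Multiset_Permutations"
begin

type_synonym graph = "nat set \<times> nat set set"

definition verts :: "graph \<Rightarrow> nat set" where "verts G = fst G"
definition edges :: "graph \<Rightarrow> nat set set" where "edges G = snd G"

definition is_graph :: "graph \<Rightarrow> bool" where
  "is_graph G \<longleftrightarrow> finite (verts G) \<and>
     (\<forall>e\<in>edges G. \<exists>u v. e = {u, v} \<and> u \<noteq> v \<and> u \<in> verts G \<and> v \<in> verts G)"

definition add_edge :: "graph \<Rightarrow> nat \<Rightarrow> nat \<Rightarrow> graph" where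
  "add_edge G u v = (verts G, insert {u, v} (edges G))"

definition adj :: "graph \<Rightarrow> nat \<Rightarrow> nat \<Rightarrow> bool" where
  "adj G u v \<longleftrightarrow> {u, v} \<in> edges G"

definition reach :: "graph \<Rightarrow> nat \<Rightarrow> nat \<Rightarrow> bool" where
  "reach G u v \<longleftrightarrow> u \<in> verts G \<and> v \<in> verts G \<and> (adj G)\<^sup>*\<^sup>* u v"

definition component :: "graph \<Rightarrow> nat \<Rightarrow> nat set" where
  "component G u = {w. reach G u w}"

definition induced :: "graph \<Rightarrow> nat set \<Rightarrow> graph" where
  "induced G S = (verts G \<inter> S, {e \<in> edges G. e \<subseteq> S})"

definition connected_graph :: "graph \<Rightarrow> bool" where
  "connected_graph G \<longleftrightarrow> verts G \<noteq> {} \<and> (\<forall>u\<in>verts G. \<forall>v\<in>verts G. reach G u v)"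

definition is_cycle :: "graph \<Rightarrow> nat list \<Rightarrow> bool" where
  "is_cycle G cs \<longleftrightarrow> length cs \<ge> 3 \<and> distinct cs \<and> set cs \<subseteq> verts G \<and>
     (\<forall>i. Suc i < length cs \<longrightarrow> adj G (cs ! i) (cs ! Suc i)) \<and> adj G (last cs) (hd cs)"

definition is_tree :: "graph \<Rightarrow> bool" where
  "is_tree G \<longleftrightarrow> connected_graph G \<and> (\<nexists>cs. is_cycle G cs)"

definition minor :: "graph \<Rightarrow> graph \<Rightarrow> bool" where
  "minor H G \<longleftrightarrow> (\<exists>\<phi> :: nat \<Rightarrow> nat set.
     (\<forall>x\<in>verts H. \<phi> x \<subseteq> verts G \<and> connected_graph (induced G (\<phi> x))) \<and>
     (\<forall>x\<in>verts H. \<forall>y\<in>verts H. x \<noteq> y \<longrightarrow> \<phi> x \<inter> \<phi> y = {}) \<and>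
     (\<forall>x y. {x, y} \<in> edges H \<longrightarrow> (\<exists>u\<in>\<phi> x. \<exists>v\<in>\<phi> y. {u, v} \<in> edges G)))"

definition isomorphic :: "graph \<Rightarrow> graph \<Rightarrow> bool" where
  "isomorphic G H \<longleftrightarrow> (\<exists>f. bij_betw f (verts G) (verts H) \<and> edges H = (\<lambda>e. f ` e) ` edges G)"

definition admissible_class :: "graph set \<Rightarrow> bool" where
  "admissible_class P \<longleftrightarrow>
     (\<forall>G\<in>P. is_graph G) \<and>
     (\<exists>G. is_graph G \<and> G \<notin> P) \<and>                                         \<comment> \<open>(a)\<close>
     (\<forall>V. finite V \<longrightarrow> (V, {}) \<in> P) \<and>                                     \<comment> \<open>(b)\<close>
     (\<forall>G H. G \<in> P \<and> is_graph H \<and> isomorphic G H \<longrightarrow> H \<in> P) \<and>               \<comment> \<open>(c)\<close>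
     (\<forall>G H. G \<in> P \<and> is_graph H \<and> minor H G \<longrightarrow> H \<in> P) \<and>                    \<comment> \<open>(d)\<close>
     (\<forall>G u v. G \<in> P \<and> u \<in> verts G \<and> v \<in> verts G \<and> \<not> reach G u v
         \<longrightarrow> add_edge G u v \<in> P) \<and>                                          \<comment> \<open>(e)\<close>
     (\<forall>G u v. G \<in> P \<and> u \<in> verts G \<and> v \<in> verts G \<and> u \<noteq> v \<and> \<not> adj G u v \<and>
         reach G u v \<and> is_tree (induced G (component G u))
         \<longrightarrow> add_edge G u v \<in> P)                                            \<comment> \<open>(f)\<close>"

definition Kn_edges :: "nat \<Rightarrow> nat set set" where
  "Kn_edges n = {{u, v} | u v. u \<in> {1..n} \<and> v \<in> {1..n} \<and> u \<noteq> v}"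

definition ordering_pmf :: "nat \<Rightarrow> nat set list pmf" where
  "ordering_pmf n = pmf_of_set (permutations_of_set (Kn_edges n))"

definition proc_step :: "graph set \<Rightarrow> nat set \<Rightarrow> graph \<Rightarrow> graph" where
  "proc_step P e G = (if (verts G, insert e (edges G)) \<in> P then (verts G, insert e (edges G)) else G)"

definition proc :: "graph set \<Rightarrow> nat \<Rightarrow> nat set list \<Rightarrow> nat \<Rightarrow> graph" where
  "proc P n xs t = fold (proc_step P) (take t xs) ({1..n}, {})"

definition rej :: "graph set \<Rightarrow> nat \<Rightarrow> nat set list \<Rightarrow> nat \<Rightarrow> nat" where
  "rej P n xs t = t - card (edges (proc P n xs t))"

definition forb :: "graph set \<Rightarrow> nat \<Rightarrow> graph \<Rightarrow> nat" where
  "forb P n H = card {e \<in> Kn_edges n - edges H. (verts H, insert e (edges H)) \<notin> P}"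

definition whp :: "(nat \<Rightarrow> nat set list \<Rightarrow> bool) \<Rightarrow> bool" where
  "whp Q \<longleftrightarrow> (\<lambda>n. measure_pmf.prob (ordering_pmf n) {xs. Q n xs}) \<longlonglongrightarrow> 1"

end

(*
  Reveal the random ordering one edge at a time. By minor-closedness a forbidden edge stays
  forbidden, and the next edge is rejected exactly when it is forbidden in the current graph,
  which given the past happens with probability (forbidden unrevealed edges) / (unrevealed edges).

  If more than (1 + \<delta>) \<alpha> N edges are forbidden at time t1, then, since only t2 = o(\<alpha> N) edges
  are revealed up to time t2, every step in between rejects with conditional probability at
  least (1 + \<delta>/2) \<alpha>; an exponential-moment (Chernoff) bound, proved step by step over the
  ordering, makes at most \<alpha> (t2 - t1) rejections exponentially unlikely in \<alpha> (t2 - t1) \<delta>^2.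
  Dually, if fewer than (1 - \<delta>) \<alpha> N edges are forbidden at time t2, then all earlier steps
  reject with probability at most about (1 - \<delta>/2) \<alpha>, which makes at least \<alpha> (t2 - t1)
  rejections unlikely. Letting \<delta> tend to 0 slowly enough, both exceptional probabilities vanish.
*)

theory Submission
  imports Defs "HOL-Real_Asymp.Real_Asymp"
begin

section \<open>Averages over orderings\<close>

definition perm_avg :: "'a set \<Rightarrow> ('a list \<Rightarrow> real) \<Rightarrow> real" where
  "perm_avg A f = (\<Sum>xs\<in>permutations_of_set A. f xs) / card (permutations_of_set A)"

lemma perm_avg_Cons:
  assumes "finite A" "A \<noteq> {}"
  shows "perm_avg A f = (\<Sum>x\<in>A. perm_avg (A - {x}) (\<lambda>ys. f (x # ys))) / card A"
proof -
  have "(\<Sum>xs\<in>permutations_of_set A. f xs)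
      = (\<Sum>x\<in>A. \<Sum>xs\<in>(#) x ` permutations_of_set (A - {x}). f xs)"
    unfolding permutations_of_set_nonempty[OF assms(2)]
    by (rule sum.UNION_disjoint) (use assms in auto)
  also have "\<dots> = (\<Sum>x\<in>A. \<Sum>ys\<in>permutations_of_set (A - {x}). f (x # ys))"
    by (rule sum.cong[OF refl]) (simp add: sum.reindex inj_on_def)
  finally have sum_eq: "(\<Sum>xs\<in>permutations_of_set A. f xs)
      = (\<Sum>x\<in>A. \<Sum>ys\<in>permutations_of_set (A - {x}). f (x # ys))" .
  obtain m where m: "card A = Suc m" using assms by (cases "card A") auto
  have card_perms: "card (permutations_of_set A) = Suc m * fact m"
    using assms m by simp
  have card_perms_Diff: "card (permutations_of_set (A - {x})) = fact m" if "x \<in> A" for x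
    using assms m that by simp
  have "perm_avg A f = (\<Sum>x\<in>A. (\<Sum>ys\<in>permutations_of_set (A - {x}). f (x # ys)) / fact m) / Suc m"
    unfolding perm_avg_def sum_eq card_perms by (simp add: sum_divide_distrib[symmetric] field_simps)
  also have "\<dots> = (\<Sum>x\<in>A. perm_avg (A - {x}) (\<lambda>ys. f (x # ys))) / card A"
    unfolding m perm_avg_def by (intro arg_cong2[where f="(/)"] sum.cong refl) (simp add: card_perms_Diff)
  finally show ?thesis .
qed

lemma perm_avg_mono:
  assumes "\<And>xs. xs \<in> permutations_of_set A \<Longrightarrow> f xs \<le> g xs"
  shows "perm_avg A f \<le> perm_avg A g"
  unfolding perm_avg_def by (intro divide_right_mono sum_mono assms) auto

lemma perm_avg_const: "finite A \<Longrightarrow> perm_avg A (\<lambda>_. c) = c"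
  unfolding perm_avg_def by simp

lemma perm_avg_cmult: "perm_avg A (\<lambda>xs. c * f xs) = c * perm_avg A f"
  unfolding perm_avg_def by (simp add: sum_distrib_left)

lemma perm_avg_le_if_Cons_le:
  assumes "finite A" "A \<noteq> {}" "\<And>x. x \<in> A \<Longrightarrow> perm_avg (A - {x}) (\<lambda>ys. f (x # ys)) \<le> b"
  shows "perm_avg A f \<le> b"
proof -
  have "(\<Sum>x\<in>A. perm_avg (A - {x}) (\<lambda>ys. f (x # ys))) \<le> (\<Sum>x\<in>A. b)"
    by (rule sum_mono) (rule assms(3))
  then show ?thesis using assms(1,2) by (simp add: perm_avg_Cons field_simps card_gt_0_iff)
qed

text \<open>One step of an exponential-moment estimate: the first entry lands in B, where it
  multiplies the conditional average by r, with probability card B / card A.\<close>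
lemma perm_avg_le_weighted:
  assumes "finite A" "A \<noteq> {}" "B \<subseteq> A" "0 \<le> c"
    and "\<And>x. x \<in> A \<Longrightarrow> perm_avg (A - {x}) (\<lambda>ys. f (x # ys)) \<le> (if x \<in> B then r else 1) * c"
  shows "perm_avg A f \<le> c * exp ((r - 1) * (card B / card A))"
proof -
  have card_pos: "card A > 0" using assms(1,2) by (simp add: card_gt_0_iff)
  have card_le: "card B \<le> card A" using assms(1,3) by (rule card_mono)
  have "(\<Sum>x\<in>A. if x \<in> B then r else (1::real)) = (\<Sum>x\<in>B. r) + (\<Sum>x\<in>A - B. 1)"
    using assms(1,3) by (simp add: sum.If_cases Int_absorb1 Diff_eq)
  also have "\<dots> = r * card B + (card A - card B)"
    using assms(1,3) by (simp add: card_Diff_subset finite_subset of_nat_diff card_le)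
  finally have weights: "(\<Sum>x\<in>A. if x \<in> B then r else (1::real)) = r * card B + (card A - card B)" .
  have "perm_avg A f \<le> (\<Sum>x\<in>A. (if x \<in> B then r else 1) * c) / card A"
    unfolding perm_avg_Cons[OF assms(1,2)] by (intro divide_right_mono sum_mono assms(5)) auto
  also have "\<dots> = c * ((r * card B + (card A - card B)) / card A)"
    unfolding sum_distrib_right[symmetric] weights by simp
  also have "\<dots> = c * (1 + (r - 1) * (card B / card A))"
    using card_pos card_le by (simp add: field_simps of_nat_diff)
  also have "\<dots> \<le> c * exp ((r - 1) * (card B / card A))"
    using assms(4) by (intro mult_left_mono) auto
  finally show ?thesis .
qed

lemma perm_avg_prefix_le:
  assumes "finite A" "j \<le> card A"
    and "\<And>ys. distinct ys \<Longrightarrow> set ys \<subseteq> A \<Longrightarrow> length ys = j \<Longrightarrow> perm_avg (A - set ys) (f ys) \<le> b"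
  shows "perm_avg A (\<lambda>xs. f (take j xs) (drop j xs)) \<le> b"
  using assms
proof (induction j arbitrary: A f)
  case 0
  then show ?case using "0.prems"(3)[of "[]"] by simp
next
  case (Suc j)
  show ?case
  proof (rule perm_avg_le_if_Cons_le)
    show "finite A" "A \<noteq> {}" using Suc.prems(1,2) by auto
    fix x assume x: "x \<in> A"
    have "perm_avg (A - {x}) (\<lambda>ys. f (x # take j ys) (drop j ys)) \<le> b"
    proof (rule Suc.IH)
      fix zs assume "distinct zs" "set zs \<subseteq> A - {x}" "length zs = j"
      moreover have "A - {x} - set zs = A - set (x # zs)" by auto
      ultimately show "perm_avg (A - {x} - set zs) (f (x # zs)) \<le> b"
        using Suc.prems(3)[of "x # zs"] x by auto
    qed (use Suc.prems x in auto)
    then show "perm_avg (A - {x}) (\<lambda>ys. f (take (Suc j) (x # ys)) (drop (Suc j) (x # ys))) \<le> b"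
      by simp
  qed
qed

lemma finite_Kn_edges: "finite (Kn_edges n)"
proof (rule finite_subset)
  show "Kn_edges n \<subseteq> Pow {1..n}" unfolding Kn_edges_def by auto
qed simp

lemma card_Kn_edges: "card (Kn_edges n) = n choose 2"
proof -
  have "Kn_edges n = {B. B \<subseteq> {1..n} \<and> card B = 2}"
    unfolding Kn_edges_def by (auto simp: card_2_iff; blast)
  then show ?thesis using n_subsets[of "{1..n}" 2] by simp
qed

lemma prob_ordering_le_perm_avg:
  assumes "\<And>xs. xs \<in> permutations_of_set (Kn_edges n) \<Longrightarrow> E xs \<Longrightarrow> 1 \<le> h xs"
    and "\<And>xs. xs \<in> permutations_of_set (Kn_edges n) \<Longrightarrow> 0 \<le> h xs"
  shows "measure_pmf.prob (ordering_pmf n) {xs. E xs} \<le> perm_avg (Kn_edges n) h"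
proof -
  have "measure_pmf.prob (ordering_pmf n) {xs. E xs}
      = perm_avg (Kn_edges n) (\<lambda>xs. if E xs then 1 else 0)"
    using finite_Kn_edges unfolding ordering_pmf_def perm_avg_def
    by (subst measure_pmf_of_set) (auto simp: sum.If_cases Int_def)
  also have "\<dots> \<le> perm_avg (Kn_edges n) h"
    by (rule perm_avg_mono) (use assms(1,2) in auto)
  finally show ?thesis .
qed

section \<open>Forbidden edges\<close>

definition forbidden_edge :: "graph set \<Rightarrow> graph \<Rightarrow> nat set \<Rightarrow> bool" where
  "forbidden_edge P G e \<longleftrightarrow> (verts G, insert e (edges G)) \<notin> P"

definition forbidden_in :: "graph set \<Rightarrow> graph \<Rightarrow> nat set set \<Rightarrow> nat set set" where
  "forbidden_in P G A = {e \<in> A. forbidden_edge P G e}"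

definition graph_in :: "graph set \<Rightarrow> nat \<Rightarrow> graph \<Rightarrow> bool" where
  "graph_in P n G \<longleftrightarrow> G \<in> P \<and> verts G = {1..n}"

lemma admissible_class_is_graph:
  assumes "admissible_class P" "G \<in> P"
  shows "is_graph G"
proof -
  have "\<forall>G\<in>P. is_graph G" using assms(1) unfolding admissible_class_def by (elim conjE)
  then show ?thesis using assms(2) by blast
qed

lemma admissible_class_minor:
  assumes "admissible_class P" "G \<in> P" "is_graph H" "minor H G"
  shows "H \<in> P"
proof -
  have "\<forall>G H. G \<in> P \<and> is_graph H \<and> minor H G \<longrightarrow> H \<in> P"
    using assms(1) unfolding admissible_class_def by (elim conjE)
  then show ?thesis using assms(2-4) by blast
qed

lemma graph_in_empty:
  assumes "admissible_class P"
  shows "graph_in P n ({1..n}, {})"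
proof -
  have "\<forall>V. finite V \<longrightarrow> (V, {}) \<in> P" using assms unfolding admissible_class_def by (elim conjE)
  then show ?thesis unfolding graph_in_def by (simp add: verts_def)
qed

lemma spanning_subgraph_minor:
  assumes "verts H = verts G" "edges H \<subseteq> edges G"
  shows "minor H G"
  unfolding minor_def
proof (intro exI[of _ "\<lambda>x. {x}"] conjI ballI allI impI)
  fix x assume x: "x \<in> verts H"
  show "{x} \<subseteq> verts G" using x assms by auto
  show "connected_graph (induced G {x})"
    unfolding connected_graph_def induced_def reach_def using x assms by (auto simp: verts_def edges_def)
next
  fix x y assume "{x, y} \<in> edges H"
  then show "\<exists>u\<in>{x}. \<exists>v\<in>{y}. {u, v} \<in> edges G" using assms by auto
qed auto

lemma is_graph_insert_Kn_edge:
  assumes "is_graph G" "verts G = {1..n}" "e \<in> Kn_edges n"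
  shows "is_graph (verts G, insert e (edges G))"
proof -
  obtain u v where "e = {u, v}" "u \<noteq> v" "u \<in> {1..n}" "v \<in> {1..n}"
    using assms(3) unfolding Kn_edges_def by blast
  then show ?thesis using assms(1,2) unfolding is_graph_def verts_def edges_def by fastforce
qed

text \<open>The only place where minor-closedness enters: an accepted edge never makes a
  forbidden edge admissible again.\<close>
lemma forbidden_edge_insert:
  assumes "admissible_class P" "graph_in P n G" "e \<in> Kn_edges n" "forbidden_edge P G e"
  shows "forbidden_edge P (verts G, insert x (edges G)) e"
proof (rule ccontr)
  let ?G' = "(verts G, insert e (insert x (edges G)))"
  assume "\<not> forbidden_edge P (verts G, insert x (edges G)) e"
  then have "?G' \<in> P" unfolding forbidden_edge_def by (simp add: verts_def edges_def)
  moreover have "is_graph (verts G, insert e (edges G))"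
    using is_graph_insert_Kn_edge admissible_class_is_graph assms(1-3) unfolding graph_in_def by blast
  moreover have "minor (verts G, insert e (edges G)) ?G'"
    by (rule spanning_subgraph_minor) (auto simp: verts_def edges_def)
  ultimately have "(verts G, insert e (edges G)) \<in> P" using admissible_class_minor assms(1) by blast
  then show False using assms(4) unfolding forbidden_edge_def by simp
qed

lemma proc_step_eq:
  "proc_step P e G = (if forbidden_edge P G e then G else (verts G, insert e (edges G)))"
  unfolding proc_step_def forbidden_edge_def by simp

lemma graph_in_fold_proc_step: "graph_in P n G \<Longrightarrow> graph_in P n (fold (proc_step P) ys G)"
proof (induction ys arbitrary: G)
  case (Cons y ys)
  then show ?case unfolding graph_in_def proc_step_def by (auto simp: verts_def)
qed simp

lemma graph_in_proc_step: "graph_in P n G \<Longrightarrow> graph_in P n (proc_step P e G)"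
  using graph_in_fold_proc_step[of P n G "[e]"] by simp

lemma card_forbidden_in_proc_step:
  assumes "admissible_class P" "graph_in P n G" "A \<subseteq> Kn_edges n"
  shows "card (forbidden_in P G A) \<le> Suc (card (forbidden_in P (proc_step P e G) (A - {e})))"
proof -
  let ?F = "forbidden_in P G A" and ?F' = "forbidden_in P (proc_step P e G) (A - {e})"
  have fin: "finite A" using assms(3) finite_Kn_edges finite_subset by blast
  have "?F - {e} \<subseteq> ?F'"
  proof
    fix x assume x: "x \<in> ?F - {e}"
    then have "forbidden_edge P (proc_step P e G) x"
      using forbidden_edge_insert[OF assms(1,2), of x e] assms(3)
      unfolding forbidden_in_def proc_step_eq by auto
    then show "x \<in> ?F'" using x unfolding forbidden_in_def by blast
  qed
  then have "card (?F - {e}) \<le> card ?F'" using fin by (intro card_mono) (auto simp: forbidden_in_def)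
  moreover have "card ?F \<le> Suc (card (?F - {e}))"
    using fin by (cases "e \<in> ?F") (simp_all add: card_Suc_Diff1 forbidden_in_def)
  ultimately show ?thesis by linarith
qed

lemma not_forbidden_edge_if_edge: "G \<in> P \<Longrightarrow> e \<in> edges G \<Longrightarrow> \<not> forbidden_edge P G e"
  unfolding forbidden_edge_def by (cases G) (simp add: verts_def edges_def insert_absorb)

lemma forbidden_in_le_forb:
  assumes "graph_in P n G" "A \<subseteq> Kn_edges n"
  shows "card (forbidden_in P G A) \<le> forb P n G"
  unfolding forb_def
proof (rule card_mono)
  show "finite {e \<in> Kn_edges n - edges G. (verts G, insert e (edges G)) \<notin> P}"
    using finite_Kn_edges by auto
  show "forbidden_in P G A \<subseteq> {e \<in> Kn_edges n - edges G. (verts G, insert e (edges G)) \<notin> P}"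
  proof
    fix e assume e: "e \<in> forbidden_in P G A"
    then have "forbidden_edge P G e" "e \<in> Kn_edges n" using assms(2) by (auto simp: forbidden_in_def)
    moreover have "e \<notin> edges G"
      using not_forbidden_edge_if_edge[of G P e] assms(1) calculation(1) by (auto simp: graph_in_def)
    ultimately show "e \<in> {e \<in> Kn_edges n - edges G. (verts G, insert e (edges G)) \<notin> P}"
      by (simp add: forbidden_edge_def)
  qed
qed

lemma forb_proc_step_mono:
  assumes "admissible_class P" "graph_in P n G"
  shows "forb P n G \<le> forb P n (proc_step P x G)"
proof (cases "forbidden_edge P G x")
  case False
  let ?G' = "(verts G, insert x (edges G))"
  have "{e \<in> Kn_edges n - edges G. (verts G, insert e (edges G)) \<notin> P}
      \<subseteq> {e \<in> Kn_edges n - edges ?G'. (verts ?G', insert e (edges ?G')) \<notin> P}"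
  proof
    fix e assume e: "e \<in> {e \<in> Kn_edges n - edges G. (verts G, insert e (edges G)) \<notin> P}"
    then have "forbidden_edge P G e" by (simp add: forbidden_edge_def)
    then have "e \<noteq> x" "forbidden_edge P ?G' e"
      using False forbidden_edge_insert[OF assms] e by auto
    then show "e \<in> {e \<in> Kn_edges n - edges ?G'. (verts ?G', insert e (edges ?G')) \<notin> P}"
      using e by (simp add: forbidden_edge_def edges_def verts_def)
  qed
  then have "forb P n G \<le> forb P n ?G'"
    unfolding forb_def by (intro card_mono) (use finite_Kn_edges in auto)
  then show ?thesis using False by (simp add: proc_step_eq)
qed (simp add: proc_step_eq)

lemma forb_fold_proc_step_mono:
  assumes "admissible_class P" "graph_in P n G"
  shows "forb P n G \<le> forb P n (fold (proc_step P) ys G)"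
  using assms(2)
proof (induction ys arbitrary: G)
  case (Cons y ys)
  have "forb P n G \<le> forb P n (proc_step P y G)"
    by (rule forb_proc_step_mono[OF assms(1) Cons.prems])
  also have "\<dots> \<le> forb P n (fold (proc_step P) ys (proc_step P y G))"
    using Cons.IH[OF graph_in_proc_step[OF Cons.prems]] .
  finally show ?case by simp
qed simp

section \<open>Counting rejections\<close>

fun rejections :: "graph set \<Rightarrow> graph \<Rightarrow> nat set list \<Rightarrow> nat" where
  "rejections P G [] = 0"
| "rejections P G (x # xs) = (if forbidden_edge P G x then 1 else 0) + rejections P (proc_step P x G) xs"

text \<open>Rejections counted only while fewer than \<theta> edges are forbidden; this stopped
  count has an exponential moment that is controlled at every step.\<close>
fun rejections_below :: "graph set \<Rightarrow> nat \<Rightarrow> real \<Rightarrow> graph \<Rightarrow> nat set list \<Rightarrow> nat" where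
  "rejections_below P n \<theta> G [] = 0"
| "rejections_below P n \<theta> G (x # xs) =
     (if forbidden_edge P G x \<and> real (forb P n G) < \<theta> then 1 else 0)
     + rejections_below P n \<theta> (proc_step P x G) xs"

lemma rejections_append:
  "rejections P G (xs @ ys) = rejections P G xs + rejections P (fold (proc_step P) xs G) ys"
  by (induction xs arbitrary: G) auto

lemma rejections_le_length: "rejections P G xs \<le> length xs"
proof (induction xs arbitrary: G)
  case (Cons x xs)
  have "rejections P (proc_step P x G) xs \<le> length xs" by (rule Cons.IH)
  then show ?case by simp
qed simp

lemma card_edges_fold_proc_step:
  assumes "distinct xs" "set xs \<inter> edges G = {}" "finite (edges G)"
  shows "card (edges (fold (proc_step P) xs G)) + rejections P G xs = card (edges G) + length xs"
  using assms
proof (induction xs arbitrary: G)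
  case (Cons x xs)
  show ?case
  proof (cases "forbidden_edge P G x")
    case True
    then show ?thesis using Cons.IH[of G] Cons.prems by (simp add: proc_step_eq)
  next
    case False
    let ?G' = "(verts G, insert x (edges G))"
    have "card (edges (fold (proc_step P) xs ?G')) + rejections P ?G' xs = card (edges ?G') + length xs"
      by (rule Cons.IH) (use Cons.prems in \<open>auto simp: edges_def\<close>)
    moreover have "card (edges ?G') = Suc (card (edges G))"
      using Cons.prems by (simp add: edges_def)
    moreover have "proc_step P x G = ?G'" using False by (simp add: proc_step_eq)
    ultimately show ?thesis using False by simp
  qed
qed simp

lemma rej_eq_rejections:
  assumes "xs \<in> permutations_of_set (Kn_edges n)" "t \<le> length xs"
  shows "rej P n xs t = rejections P ({1..n}, {}) (take t xs)"
proof -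
  have "distinct (take t xs)" using assms(1) by (simp add: permutations_of_set_def)
  from card_edges_fold_proc_step[OF this, of "({1..n}, {})" P] assms(2)
  have "card (edges (proc P n xs t)) + rejections P ({1..n}, {}) (take t xs) = t"
    unfolding proc_def by (simp add: edges_def)
  then show ?thesis unfolding rej_def by simp
qed

lemma rej_diff_eq_rejections:
  assumes "xs \<in> permutations_of_set (Kn_edges n)" "t1 \<le> t2" "t2 \<le> n choose 2"
  shows "real (rej P n xs t2) - real (rej P n xs t1)
       = real (rejections P (proc P n xs t1) (take (t2 - t1) (drop t1 xs)))"
proof -
  have len: "length xs = n choose 2"
    using assms(1) card_Kn_edges[of n]
    by (metis distinct_card mem_Collect_eq permutations_of_setD(1,2) permutations_of_set_def)
  have "take t2 xs = take t1 xs @ take (t2 - t1) (drop t1 xs)"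
    using take_add[of t1 "t2 - t1" xs] assms(2) by simp
  then show ?thesis
    using rej_eq_rejections[OF assms(1), of t2 P] rej_eq_rejections[OF assms(1), of t1 P] assms len
    by (simp add: rejections_append proc_def)
qed

lemma rejections_below_eq_rejections:
  assumes "admissible_class P" "graph_in P n G" "real (forb P n (fold (proc_step P) xs G)) < \<theta>"
  shows "rejections_below P n \<theta> G xs = rejections P G xs"
  using assms(2,3)
proof (induction xs arbitrary: G)
  case (Cons x xs)
  have "forb P n G \<le> forb P n (fold (proc_step P) (x # xs) G)"
    by (rule forb_fold_proc_step_mono[OF assms(1) Cons.prems(1)])
  then have "real (forb P n G) < \<theta>" using Cons.prems(2) by linarith
  moreover have "rejections_below P n \<theta> (proc_step P x G) xs = rejections P (proc_step P x G) xs"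
    using Cons.IH[OF graph_in_proc_step[OF Cons.prems(1)]] Cons.prems(2) by simp
  ultimately show ?case by simp
qed simp

section \<open>Exponential moments of the rejection count\<close>

lemma perm_avg_exp_neg_rejections_le:
  fixes l q :: real
  assumes "admissible_class P" "0 \<le> l" "0 \<le> q"
    and "graph_in P n G" "A \<subseteq> Kn_edges n" "k \<le> card A"
    and "q * card A + k \<le> card (forbidden_in P G A)"
  shows "perm_avg A (\<lambda>xs. exp (- l * rejections P G (take k xs))) \<le> exp (- q * (1 - exp (- l))) ^ k"
  using assms(4-)
proof (induction k arbitrary: G A)
  case 0
  then show ?case using finite_subset[OF _ finite_Kn_edges] by (simp add: perm_avg_const)
next
  case (Suc k)
  define r where "r = exp (- l)"
  define c where "c = exp (- q * (1 - r))"
  let ?F = "forbidden_in P G A"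
  have fin: "finite A" using Suc.prems(2) finite_Kn_edges finite_subset by blast
  have ne: "A \<noteq> {}" using Suc.prems(3) by auto
  have step: "perm_avg (A - {x}) (\<lambda>ys. exp (- l * rejections P G (take (Suc k) (x # ys))))
      \<le> (if x \<in> ?F then r else 1) * c ^ k" if x: "x \<in> A" for x
  proof -
    let ?G' = "proc_step P x G"
    let ?F' = "forbidden_in P ?G' (A - {x})"
    have "real (card ?F) \<le> real (card ?F') + 1"
      using card_forbidden_in_proc_step[OF assms(1) Suc.prems(1,2), of x] by simp
    moreover have "q * card (A - {x}) \<le> q * card A"
      using assms(3) fin by (intro mult_left_mono) (auto intro: card_mono)
    ultimately have "q * card (A - {x}) + k \<le> card ?F'"
      using Suc.prems(4) by simp
    moreover have "k \<le> card (A - {x})"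
      using Suc.prems(3) x fin by simp
    ultimately have IH: "perm_avg (A - {x}) (\<lambda>ys. exp (- l * rejections P ?G' (take k ys))) \<le> c ^ k"
      unfolding c_def r_def
      using Suc.IH[OF graph_in_proc_step[OF Suc.prems(1)], of "A - {x}"] Suc.prems(2) by blast
    have "exp (- l * rejections P G (take (Suc k) (x # ys)))
        = (if x \<in> ?F then r else 1) * exp (- l * rejections P ?G' (take k ys))" for ys
      using x by (simp add: forbidden_in_def r_def algebra_simps exp_add[symmetric])
    then show ?thesis using IH by (simp add: perm_avg_cmult r_def)
  qed
  have "q \<le> card ?F / card A"
    using Suc.prems(4) fin ne by (simp add: field_simps card_gt_0_iff)
  moreover have "r \<le> 1" using assms(2) by (simp add: r_def)
  ultimately have "(1 - r) * q \<le> (1 - r) * (card ?F / card A)" by (intro mult_left_mono) auto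
  then have "(r - 1) * (card ?F / card A) \<le> - q * (1 - r)" by argo
  then have weight: "exp ((r - 1) * (card ?F / card A)) \<le> c" by (simp add: c_def)
  have "perm_avg A (\<lambda>xs. exp (- l * rejections P G (take (Suc k) xs)))
      \<le> c ^ k * exp ((r - 1) * (card ?F / card A))"
    by (rule perm_avg_le_weighted[OF fin ne _ _ step]) (auto simp: forbidden_in_def c_def)
  also have "\<dots> \<le> c ^ k * c" using weight by (intro mult_left_mono) (auto simp: c_def)
  finally show ?case by (simp add: c_def r_def mult.commute)
qed

lemma perm_avg_exp_rejections_below_le:
  fixes l q \<theta> :: real
  assumes "0 \<le> l" "0 \<le> q"
    and "graph_in P n G" "A \<subseteq> Kn_edges n" "k \<le> card A" "\<theta> \<le> q * (real (card A) - k)"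
  shows "perm_avg A (\<lambda>xs. exp (l * rejections_below P n \<theta> G (take k xs))) \<le> exp (q * (exp l - 1)) ^ k"
  using assms(3-)
proof (induction k arbitrary: G A)
  case 0
  then show ?case using finite_subset[OF _ finite_Kn_edges] by (simp add: perm_avg_const)
next
  case (Suc k)
  define r where "r = exp l"
  define c where "c = exp (q * (r - 1))"
  define B where "B = (if real (forb P n G) < \<theta> then forbidden_in P G A else {})"
  have fin: "finite A" using Suc.prems(2) finite_Kn_edges finite_subset by blast
  have ne: "A \<noteq> {}" using Suc.prems(3) by auto
  have r: "1 \<le> r" using assms(1) by (simp add: r_def)
  have step: "perm_avg (A - {x}) (\<lambda>ys. exp (l * rejections_below P n \<theta> G (take (Suc k) (x # ys))))
      \<le> (if x \<in> B then r else 1) * c ^ k" if x: "x \<in> A" for x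
  proof -
    let ?G' = "proc_step P x G"
    have "real (card (A - {x})) = real (card A) - 1"
      using x fin card_Suc_Diff1[OF fin x] by linarith
    then have IH: "perm_avg (A - {x}) (\<lambda>ys. exp (l * rejections_below P n \<theta> ?G' (take k ys))) \<le> c ^ k"
      unfolding c_def r_def
      by (intro Suc.IH[OF graph_in_proc_step[OF Suc.prems(1)]])
        (use Suc.prems(2-4) x fin in \<open>auto simp: algebra_simps\<close>)
    have "exp (l * rejections_below P n \<theta> G (take (Suc k) (x # ys)))
        = (if x \<in> B then r else 1) * exp (l * rejections_below P n \<theta> ?G' (take k ys))" for ys
      using x by (auto simp: B_def forbidden_in_def r_def algebra_simps exp_add[symmetric])
    then show ?thesis using IH r by (simp add: perm_avg_cmult mult_left_mono)
  qed
  have "card B / card A \<le> q"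
  proof (cases "real (forb P n G) < \<theta>")
    case True
    have "real (card B) \<le> forb P n G"
      using forbidden_in_le_forb[OF Suc.prems(1,2)] True by (simp add: B_def)
    also have "\<dots> \<le> q * card A"
      using True Suc.prems(4) assms(2) by (smt (verit) mult_left_mono of_nat_0_le_iff)
    finally show ?thesis using fin ne by (simp add: field_simps card_gt_0_iff)
  qed (use assms(2) in \<open>simp add: B_def\<close>)
  then have "(r - 1) * (card B / card A) \<le> (r - 1) * q" using r by (intro mult_left_mono) auto
  then have weight: "exp ((r - 1) * (card B / card A)) \<le> c" by (simp add: c_def mult.commute)
  have "perm_avg A (\<lambda>xs. exp (l * rejections_below P n \<theta> G (take (Suc k) xs)))
      \<le> c ^ k * exp ((r - 1) * (card B / card A))"
    by (rule perm_avg_le_weighted[OF fin ne _ _ step]) (auto simp: B_def forbidden_in_def c_def)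
  also have "\<dots> \<le> c ^ k * c" using weight by (intro mult_left_mono) (auto simp: c_def)
  finally show ?case by (simp add: c_def r_def mult.commute)
qed

section \<open>Tail bounds for fixed n\<close>

lemma one_minus_exp_neg_ge: "0 \<le> l \<Longrightarrow> l - l ^ 2 \<le> 1 - exp (- l)" for l :: real
proof -
  assume l: "0 \<le> l"
  have "exp (- l) \<le> 1 / (1 + l)"
    using exp_ge_add_one_self[of l] l by (simp add: exp_minus field_simps)
  also have "\<dots> \<le> 1 - l + l ^ 2" using l by (simp add: field_simps power2_eq_square)
  finally show ?thesis by simp
qed

lemma exp_minus_one_le: "0 \<le> l \<Longrightarrow> l \<le> 1/2 \<Longrightarrow> exp l - 1 \<le> l + 2 * l ^ 2" for l :: real
proof -
  assume l: "0 \<le> l" "l \<le> 1/2"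
  have "exp l \<le> 1 / (1 - l)"
    using exp_ge_add_one_self[of "- l"] l by (simp add: exp_minus field_simps)
  also have "\<dots> \<le> 1 + l + 2 * l ^ 2"
  proof -
    have "(1 - l) * (1 + l + 2 * l ^ 2) = 1 + l ^ 2 * (1 - 2 * l)"
      by (simp add: algebra_simps power2_eq_square)
    also have "\<dots> \<ge> 1" using l by simp
    finally show ?thesis using l by (simp add: field_simps)
  qed
  finally show ?thesis by simp
qed

lemma lower_tail_exponent:
  fixes a \<delta> :: real
  assumes "0 < a" "0 < \<delta>" "\<delta> \<le> 1"
  shows "exp (\<delta>/8 * a * k) * exp (- ((1 + \<delta>/2) * a) * (1 - exp (- (\<delta>/8)))) ^ k
    \<le> exp (- a * k * \<delta>^2 / 32)"
proof -
  let ?l = "\<delta>/8" and ?q = "(1 + \<delta>/2) * a"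
  have "?q * (?l - ?l^2) \<le> ?q * (1 - exp (- ?l))"
    using one_minus_exp_neg_ge[of ?l] assms by (intro mult_left_mono) auto
  moreover have "a * ?l - ?q * (?l - ?l^2) + a * \<delta>^2 / 32 = a * \<delta>^2 * (\<delta> - 2) / 128"
    by (simp add: algebra_simps power2_eq_square)
  moreover have "a * \<delta>^2 * (\<delta> - 2) / 128 \<le> 0"
    using assms by (simp add: mult_nonneg_nonpos divide_nonpos_pos)
  ultimately have "?l * a - ?q * (1 - exp (- ?l)) \<le> - a * \<delta>^2 / 32" by (simp add: algebra_simps)
  then have "exp (k * (?l * a - ?q * (1 - exp (- ?l)))) \<le> exp (k * (- a * \<delta>^2 / 32))"
    by (intro exp_mono mult_left_mono) auto
  then show ?thesis
    by (simp add: exp_of_nat_mult[symmetric] exp_add[symmetric] algebra_simps)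
qed

lemma upper_tail_exponent:
  fixes a \<delta> q :: real
  assumes "0 < a" "0 < \<delta>" "\<delta> \<le> 1" "0 \<le> q" "q \<le> (1 - \<delta>/2) * a"
  shows "exp (- (\<delta>/8) * a * k) * exp (q * (exp (\<delta>/8) - 1)) ^ k \<le> exp (- a * k * \<delta>^2 / 32)"
proof -
  let ?l = "\<delta>/8"
  have "q * (exp ?l - 1) \<le> (1 - \<delta>/2) * a * (exp ?l - 1)"
    using assms by (intro mult_right_mono) auto
  also have "\<dots> \<le> (1 - \<delta>/2) * a * (?l + 2 * ?l^2)"
    using assms exp_minus_one_le[of ?l] by (intro mult_left_mono) auto
  finally have "q * (exp ?l - 1) \<le> (1 - \<delta>/2) * a * (?l + 2 * ?l^2)" .
  moreover have "- ?l * a + (1 - \<delta>/2) * a * (?l + 2 * ?l^2) + a * \<delta>^2 / 32 = - a * \<delta>^3 / 64"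
    by (simp add: power2_eq_square power3_eq_cube field_simps)
  moreover have "0 \<le> a * \<delta>^3 / 64" using assms by simp
  ultimately have "- ?l * a + q * (exp ?l - 1) \<le> - a * \<delta>^2 / 32" by linarith
  then have "exp (k * (- ?l * a + q * (exp ?l - 1))) \<le> exp (k * (- a * \<delta>^2 / 32))"
    by (intro exp_mono mult_left_mono) auto
  then show ?thesis
    by (simp add: exp_of_nat_mult[symmetric] exp_add[symmetric] algebra_simps)
qed

text \<open>Edges already revealed can be forbidden too, but there are at most t of them.\<close>
lemma forb_le_forbidden_unrevealed:
  assumes "xs \<in> permutations_of_set (Kn_edges n)"
  shows "forb P n (proc P n xs t)
    \<le> card (forbidden_in P (proc P n xs t) (Kn_edges n - set (take t xs))) + t"
proof -
  let ?G = "proc P n xs t" and ?S = "set (take t xs)"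
  have "set xs = Kn_edges n" using assms by (simp add: permutations_of_set_def)
  then have "{e \<in> Kn_edges n - edges ?G. (verts ?G, insert e (edges ?G)) \<notin> P}
      \<subseteq> forbidden_in P ?G (Kn_edges n - ?S) \<union> ?S"
    by (auto simp: forbidden_in_def forbidden_edge_def)
  then have "forb P n ?G \<le> card (forbidden_in P ?G (Kn_edges n - ?S) \<union> ?S)"
    unfolding forb_def by (rule card_mono[rotated]) (auto simp: forbidden_in_def finite_Kn_edges)
  also have "\<dots> \<le> card (forbidden_in P ?G (Kn_edges n - ?S)) + card ?S" by (rule card_Un_le)
  also have "card ?S \<le> t" using card_length[of "take t xs"] by simp
  finally show ?thesis by simp
qed

lemma perm_avg_conditioned_exp_neg_rejections_le:
  fixes l q :: real
  assumes "admissible_class P" "0 \<le> l" "0 \<le> q" "t + k \<le> n choose 2"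
  shows "perm_avg (Kn_edges n) (\<lambda>xs.
      if q * card (Kn_edges n - set (take t xs)) + k
         \<le> card (forbidden_in P (proc P n xs t) (Kn_edges n - set (take t xs)))
      then exp (- l * rejections P (proc P n xs t) (take k (drop t xs))) else 0)
    \<le> exp (- q * (1 - exp (- l))) ^ k"
proof -
  define K where "K = Kn_edges n"
  define f where "f ys zs =
      (if q * card (K - set ys) + k \<le> card (forbidden_in P (fold (proc_step P) ys ({1..n}, {})) (K - set ys))
       then exp (- l * rejections P (fold (proc_step P) ys ({1..n}, {})) (take k zs)) else 0)" for ys zs
  have "perm_avg K (\<lambda>xs. f (take t xs) (drop t xs)) \<le> exp (- q * (1 - exp (- l))) ^ k"
  proof (rule perm_avg_prefix_le)
    show "finite K" "t \<le> card K" using assms(4) by (auto simp: K_def finite_Kn_edges card_Kn_edges)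
    fix ys assume ys: "distinct ys" "set ys \<subseteq> K" "length ys = t"
    let ?G = "fold (proc_step P) ys ({1..n}, {})"
    have k: "k \<le> card (K - set ys)"
      using ys assms(4) finite_Kn_edges[of n]
      by (simp add: K_def card_Diff_subset distinct_card card_Kn_edges)
    show "perm_avg (K - set ys) (f ys) \<le> exp (- q * (1 - exp (- l))) ^ k"
    proof (cases "q * card (K - set ys) + k \<le> card (forbidden_in P ?G (K - set ys))")
      case True
      have "graph_in P n ?G" by (rule graph_in_fold_proc_step[OF graph_in_empty[OF assms(1)]])
      moreover have "K - set ys \<subseteq> Kn_edges n" by (auto simp: K_def)
      moreover have "f ys = (\<lambda>zs. exp (- l * rejections P ?G (take k zs)))"
        using True by (simp add: f_def fun_eq_iff)
      ultimately show ?thesis using perm_avg_exp_neg_rejections_le[OF assms(1-3) _ _ k True] by simp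
    next
      case False
      then have "f ys = (\<lambda>_. 0)" by (simp add: f_def fun_eq_iff)
      then show ?thesis using finite_Kn_edges[of n] by (simp add: K_def perm_avg_const)
    qed
  qed
  then show ?thesis by (simp only: K_def f_def proc_def)
qed

lemma perm_avg_conditioned_exp_rejections_below_le:
  fixes l q \<theta> :: real
  assumes "admissible_class P" "0 \<le> l" "0 \<le> q" "t + k \<le> n choose 2"
    and "\<theta> \<le> q * (real (n choose 2) - t - k)"
  shows "perm_avg (Kn_edges n) (\<lambda>xs. exp (l * rejections_below P n \<theta> (proc P n xs t) (take k (drop t xs))))
    \<le> exp (q * (exp l - 1)) ^ k"
proof -
  define K where "K = Kn_edges n"
  define f where "f ys zs = exp (l * rejections_below P n \<theta> (fold (proc_step P) ys ({1..n}, {})) (take k zs))"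
    for ys zs
  have "perm_avg K (\<lambda>xs. f (take t xs) (drop t xs)) \<le> exp (q * (exp l - 1)) ^ k"
  proof (rule perm_avg_prefix_le)
    show "finite K" "t \<le> card K" using assms(4) by (auto simp: K_def finite_Kn_edges card_Kn_edges)
    fix ys assume ys: "distinct ys" "set ys \<subseteq> K" "length ys = t"
    have card: "card (K - set ys) = (n choose 2) - t"
      using ys finite_Kn_edges[of n] by (simp add: K_def card_Diff_subset distinct_card card_Kn_edges)
    then have "\<theta> \<le> q * (real (card (K - set ys)) - k)"
      using assms(4,5) by (simp add: of_nat_diff)
    moreover have "k \<le> card (K - set ys)" using card assms(4) by simp
    moreover have "graph_in P n (fold (proc_step P) ys ({1..n}, {}))"
      by (rule graph_in_fold_proc_step[OF graph_in_empty[OF assms(1)]])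
    moreover have "K - set ys \<subseteq> Kn_edges n" by (auto simp: K_def)
    ultimately show "perm_avg (K - set ys) (f ys) \<le> exp (q * (exp l - 1)) ^ k"
      unfolding f_def using perm_avg_exp_rejections_below_le[OF assms(2,3)] by blast
  qed
  then show ?thesis by (simp only: K_def f_def proc_def)
qed

lemma prob_few_rejections_many_forbidden:
  fixes a \<delta> :: real
  assumes "admissible_class P" "0 < a" "0 < \<delta>" "\<delta> \<le> 1"
    and "t1 \<le> t2" "t2 \<le> n choose 2" "real t2 \<le> \<delta>/2 * a * real (n choose 2)"
  shows "measure_pmf.prob (ordering_pmf n)
      {xs. real (rej P n xs t2) - real (rej P n xs t1) \<le> a * (real t2 - real t1)
         \<and> \<not> real (forb P n (proc P n xs t1)) \<le> (1 + \<delta>) * a * real (n choose 2)}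
    \<le> exp (- a * (real t2 - real t1) * \<delta>^2 / 32)"
proof -
  define K where "K = Kn_edges n"
  define k where "k = t2 - t1"
  define l where "l = \<delta> / 8"
  define q where "q = (1 + \<delta>/2) * a"
  define f where "f xs =
      (if q * card (K - set (take t1 xs)) + k \<le> card (forbidden_in P (proc P n xs t1) (K - set (take t1 xs)))
       then exp (- l * rejections P (proc P n xs t1) (take k (drop t1 xs))) else 0)" for xs
  have kr: "real k = real t2 - real t1" using assms(5) by (simp add: k_def)
  have l: "0 \<le> l" and q: "0 \<le> q" using assms(2,3) by (auto simp: l_def q_def)
  have event: "1 \<le> exp (l * a * k) * f xs"
    if xs: "xs \<in> permutations_of_set (Kn_edges n)"
      and few: "real (rej P n xs t2) - real (rej P n xs t1) \<le> a * (real t2 - real t1)"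
      and many: "\<not> real (forb P n (proc P n xs t1)) \<le> (1 + \<delta>) * a * real (n choose 2)" for xs
  proof -
    let ?S = "set (take t1 xs)" and ?G1 = "proc P n xs t1" and ?R = "rejections P (proc P n xs t1) (take k (drop t1 xs))"
    have "real (card (K - ?S)) \<le> real (n choose 2)"
      by (simp add: K_def card_Kn_edges[symmetric] card_mono finite_Kn_edges)
    then have "q * card (K - ?S) \<le> q * real (n choose 2)" using q by (rule mult_left_mono)
    moreover have "real (forb P n ?G1) \<le> card (forbidden_in P ?G1 (K - ?S)) + real t1"
      using forb_le_forbidden_unrevealed[OF xs, of P t1] unfolding K_def by linarith
    ultimately have "q * card (K - ?S) + k \<le> card (forbidden_in P ?G1 (K - ?S))"
      using many assms(7) kr by (simp add: q_def algebra_simps)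
    then have "f xs = exp (- l * ?R)" by (simp add: f_def)
    moreover have "?R \<le> a * k"
      using few rej_diff_eq_rejections[OF xs assms(5,6), of P] kr by (simp add: k_def)
    then have "l * ?R \<le> l * a * k" using l by (simp add: mult_left_mono mult.assoc)
    ultimately show ?thesis by (simp add: mult_exp_exp)
  qed
  have "measure_pmf.prob (ordering_pmf n)
      {xs. real (rej P n xs t2) - real (rej P n xs t1) \<le> a * (real t2 - real t1)
         \<and> \<not> real (forb P n (proc P n xs t1)) \<le> (1 + \<delta>) * a * real (n choose 2)}
    \<le> perm_avg K (\<lambda>xs. exp (l * a * k) * f xs)"
    unfolding K_def by (rule prob_ordering_le_perm_avg) (use event in \<open>auto simp: f_def\<close>)
  also have "\<dots> \<le> exp (l * a * k) * exp (- q * (1 - exp (- l))) ^ k"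
    unfolding perm_avg_cmult f_def K_def using assms(5,6)
    by (intro mult_left_mono perm_avg_conditioned_exp_neg_rejections_le[OF assms(1) l q]) (auto simp: k_def)
  also have "\<dots> \<le> exp (- a * k * \<delta>^2 / 32)"
    unfolding l_def q_def by (rule lower_tail_exponent[OF assms(2-4)])
  finally show ?thesis by (simp add: kr)
qed

lemma rej_diff_le:
  assumes "xs \<in> permutations_of_set (Kn_edges n)" "t1 \<le> t2" "t2 \<le> n choose 2"
  shows "real (rej P n xs t2) - real (rej P n xs t1) \<le> real t2 - real t1"
proof -
  have "rejections P (proc P n xs t1) (take (t2 - t1) (drop t1 xs)) \<le> t2 - t1"
    using rejections_le_length[of P "proc P n xs t1" "take (t2 - t1) (drop t1 xs)"] by simp
  then show ?thesis using rej_diff_eq_rejections[OF assms, of P] assms(2) by (simp add: of_nat_diff)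
qed

text \<open>The rate q = \<theta> / (N - t2) spreads the threshold \<theta> = (1 - \<delta>) a N over the edges not yet revealed at
  time t2; it is at most (1 - \<delta>/2) a because t2 \<le> \<delta>/2 N.\<close>
lemma upper_tail_rate_le:
  fixes a \<delta> N :: real
  assumes "0 < a" "a \<le> 1" "0 < \<delta>" "\<delta> \<le> 1" "0 < t" "t \<le> \<delta>/2 * a * N"
  shows "0 < N - t" "(1 - \<delta>) * a * N / (N - t) \<le> (1 - \<delta>/2) * a"
proof -
  have "0 < \<delta>/2 * a * N" using assms(5,6) by linarith
  then have N: "0 < N" using zero_less_mult_pos[of "\<delta>/2 * a" N] assms(1,3) by simp
  have "\<delta>/2 * a * N \<le> \<delta>/2 * 1 * N"
    using assms(2,3) N by (intro mult_right_mono mult_left_mono) auto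
  then have t: "t \<le> \<delta>/2 * N" using assms(6) by simp
  have "\<delta> * N \<le> N" using assms(3,4) N by (intro mult_left_le_one_le) auto
  then show gap: "0 < N - t" using t assms(5) by simp
  have "(1 - \<delta>/2) * t \<le> t" using assms(3-5) by (intro mult_left_le_one_le) auto
  moreover have "(1 - \<delta>/2) * (N - t) - (1 - \<delta>) * N = \<delta>/2 * N - (1 - \<delta>/2) * t"
    by (simp add: field_simps)
  ultimately have "(1 - \<delta>) * N \<le> (1 - \<delta>/2) * (N - t)" using t by linarith
  then have "a * ((1 - \<delta>) * N) \<le> a * ((1 - \<delta>/2) * (N - t))"
    using assms(1) by (intro mult_left_mono) auto
  then show "(1 - \<delta>) * a * N / (N - t) \<le> (1 - \<delta>/2) * a"
    using gap by (simp add: pos_divide_le_eq mult_ac)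
qed

lemma prob_many_rejections_few_forbidden_aux:
  fixes a \<delta> :: real
  assumes "admissible_class P" "0 < a" "a \<le> 1" "0 < \<delta>" "\<delta> \<le> 1"
    and "t1 < t2" "t2 \<le> n choose 2" "real t2 \<le> \<delta>/2 * a * real (n choose 2)"
  shows "measure_pmf.prob (ordering_pmf n)
      {xs. a * (real t2 - real t1) \<le> real (rej P n xs t2) - real (rej P n xs t1)
         \<and> \<not> (1 - \<delta>) * a * real (n choose 2) \<le> real (forb P n (proc P n xs t2))}
    \<le> exp (- a * (real t2 - real t1) * \<delta>^2 / 32)"
proof -
  define k where "k = t2 - t1"
  define l where "l = \<delta> / 8"
  define \<theta> where "\<theta> = (1 - \<delta>) * a * real (n choose 2)"
  define q where "q = \<theta> / (real (n choose 2) - t2)"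
  define f where "f xs = exp (l * rejections_below P n \<theta> (proc P n xs t1) (take k (drop t1 xs)))" for xs
  have kr: "real k = real t2 - real t1" using assms(6) by (simp add: k_def)
  have l: "0 \<le> l" using assms(4) by (simp add: l_def)
  note rate = upper_tail_rate_le[OF assms(2-5) _ assms(8)]
  have q: "0 \<le> q" using rate(1) assms(2,6) assms(5) by (simp add: q_def \<theta>_def)
  have q_le: "q \<le> (1 - \<delta>/2) * a" using rate(2) assms(6) by (simp add: q_def \<theta>_def)
  have event: "1 \<le> exp (- l * a * k) * f xs"
    if xs: "xs \<in> permutations_of_set (Kn_edges n)"
      and many: "a * (real t2 - real t1) \<le> real (rej P n xs t2) - real (rej P n xs t1)"
      and few: "\<not> (1 - \<delta>) * a * real (n choose 2) \<le> real (forb P n (proc P n xs t2))" for xs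
  proof -
    let ?G1 = "proc P n xs t1" and ?ys = "take k (drop t1 xs)"
    have "take t2 xs = take t1 xs @ ?ys" using take_add[of t1 k xs] assms(6) by (simp add: k_def)
    then have "proc P n xs t2 = fold (proc_step P) ?ys ?G1" by (simp add: proc_def)
    then have "real (forb P n (fold (proc_step P) ?ys ?G1)) < \<theta>" using few by (simp add: \<theta>_def)
    moreover have "graph_in P n ?G1"
      unfolding proc_def by (rule graph_in_fold_proc_step[OF graph_in_empty[OF assms(1)]])
    ultimately have "f xs = exp (l * rejections P ?G1 ?ys)"
      using rejections_below_eq_rejections[OF assms(1)] by (simp add: f_def)
    moreover have "a * k \<le> rejections P ?G1 ?ys"
      using many rej_diff_eq_rejections[OF xs less_imp_le[OF assms(6)] assms(7), of P] kr
      by (simp add: k_def)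
    then have "l * a * k \<le> l * rejections P ?G1 ?ys"
      using l by (simp add: mult_left_mono mult.assoc)
    ultimately show ?thesis by (simp add: mult_exp_exp)
  qed
  have "\<theta> \<le> q * (real (n choose 2) - t1 - k)"
    using rate(1) assms(6) kr by (simp add: q_def)
  then have avg: "perm_avg (Kn_edges n) f \<le> exp (q * (exp l - 1)) ^ k"
    unfolding f_def using assms(6,7)
    by (intro perm_avg_conditioned_exp_rejections_below_le[OF assms(1) l q]) (auto simp: k_def)
  have "measure_pmf.prob (ordering_pmf n)
      {xs. a * (real t2 - real t1) \<le> real (rej P n xs t2) - real (rej P n xs t1)
         \<and> \<not> (1 - \<delta>) * a * real (n choose 2) \<le> real (forb P n (proc P n xs t2))}
    \<le> perm_avg (Kn_edges n) (\<lambda>xs. exp (- l * a * k) * f xs)"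
    by (rule prob_ordering_le_perm_avg) (use event in \<open>auto simp: f_def\<close>)
  also have "\<dots> \<le> exp (- l * a * k) * exp (q * (exp l - 1)) ^ k"
    unfolding perm_avg_cmult using avg by (intro mult_left_mono) auto
  also have "\<dots> \<le> exp (- a * k * \<delta>^2 / 32)"
    unfolding l_def by (rule upper_tail_exponent[OF assms(2,4,5) q q_le])
  finally show ?thesis by (simp add: kr)
qed

lemma prob_many_rejections_few_forbidden:
  fixes a \<delta> :: real
  assumes "admissible_class P" "0 < a" "0 < \<delta>" "\<delta> \<le> 1"
    and "t1 \<le> t2" "t2 \<le> n choose 2" "real t2 \<le> \<delta>/2 * a * real (n choose 2)"
  shows "measure_pmf.prob (ordering_pmf n)
      {xs. a * (real t2 - real t1) \<le> real (rej P n xs t2) - real (rej P n xs t1)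
         \<and> \<not> (1 - \<delta>) * a * real (n choose 2) \<le> real (forb P n (proc P n xs t2))}
    \<le> exp (- a * (real t2 - real t1) * \<delta>^2 / 32)"
proof (cases "t1 < t2 \<and> a \<le> 1")
  case True
  then show ?thesis using prob_many_rejections_few_forbidden_aux[OF assms(1,2) _ assms(3,4)] assms(6,7)
    by blast
next
  case False
  then consider "t1 = t2" | "t1 < t2" "1 < a" using assms(5) by linarith
  then show ?thesis
  proof cases
    case 1
    then show ?thesis by (simp add: measure_pmf.prob_le_1)
  next
    case 2
    \<comment> \<open>At most t2 - t1 edges can be rejected in between, so the event is empty.\<close>
    have "measure_pmf.prob (ordering_pmf n)
        {xs. a * (real t2 - real t1) \<le> real (rej P n xs t2) - real (rej P n xs t1)
           \<and> \<not> (1 - \<delta>) * a * real (n choose 2) \<le> real (forb P n (proc P n xs t2))}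
      \<le> perm_avg (Kn_edges n) (\<lambda>_. 0)"
    proof (rule prob_ordering_le_perm_avg)
      fix xs assume xs: "xs \<in> permutations_of_set (Kn_edges n)"
      have "real t2 - real t1 < a * (real t2 - real t1)" using 2 by simp
      then show "a * (real t2 - real t1) \<le> real (rej P n xs t2) - real (rej P n xs t1)
           \<and> \<not> (1 - \<delta>) * a * real (n choose 2) \<le> real (forb P n (proc P n xs t2)) \<Longrightarrow> 1 \<le> (0::real)"
        using rej_diff_le[OF xs assms(5,6), of P] by linarith
    qed simp
    then show ?thesis
      by (simp add: perm_avg_const finite_Kn_edges) (meson exp_ge_zero order_trans)
  qed
qed

section \<open>Asymptotics\<close>

lemma whp_if_exceptions_vanish:
  assumes "whp Q" "b \<longlonglongrightarrow> 0"
    and "\<forall>\<^sub>F n in sequentially. measure_pmf.prob (ordering_pmf n) {xs. Q n xs \<and> \<not> R n xs} \<le> b n"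
  shows "whp R"
  unfolding whp_def
proof (rule tendsto_sandwich)
  have "measure_pmf.prob (ordering_pmf n) {xs. Q n xs}
      \<le> measure_pmf.prob (ordering_pmf n) {xs. R n xs} + measure_pmf.prob (ordering_pmf n) {xs. Q n xs \<and> \<not> R n xs}"
    for n
    by (rule order_trans[OF measure_pmf.finite_measure_mono measure_Un_le]) auto
  note union_bound = this
  show "\<forall>\<^sub>F n in sequentially.
      measure_pmf.prob (ordering_pmf n) {xs. Q n xs} - b n \<le> measure_pmf.prob (ordering_pmf n) {xs. R n xs}"
  proof (rule eventually_mono[OF assms(3)])
    fix n assume "measure_pmf.prob (ordering_pmf n) {xs. Q n xs \<and> \<not> R n xs} \<le> b n"
    then show "measure_pmf.prob (ordering_pmf n) {xs. Q n xs} - b n \<le> measure_pmf.prob (ordering_pmf n) {xs. R n xs}"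
      using union_bound[of n] by linarith
  qed
  show "(\<lambda>n. measure_pmf.prob (ordering_pmf n) {xs. Q n xs} - b n) \<longlonglongrightarrow> 1"
    using tendsto_diff[OF assms(1)[unfolded whp_def] assms(2)] by simp
qed (auto simp: measure_pmf.prob_le_1)

lemma choose_two_ge_square: "2 \<le> n \<Longrightarrow> real n ^ 2 / 4 \<le> real (n choose 2)"
proof -
  assume n: "2 \<le> n"
  have "even (n * (n - 1))" by (cases "even n") auto
  then have "real (n choose 2) = real n * (real n - 1) / 2"
    unfolding choose_two by (simp add: real_of_nat_div of_nat_diff) (cases n; simp)
  moreover have "real n * 2 \<le> real n * real n" using n by (intro mult_left_mono) auto
  ultimately show ?thesis by (simp add: power2_eq_square field_simps)
qed

text \<open>The summand X^(-1/4) keeps X \<delta>^2 \<ge> sqrt X unbounded; the summand 8 t2 / (\<alpha> n^2)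
  ensures t2 \<le> \<delta>/2 \<alpha> N, since N \<ge> n^2/4.\<close>
lemma deviation_bounds:
  fixes \<alpha> X \<delta> :: real
  assumes "0 < \<alpha>" "X = \<alpha> * (real t2 - real t1)" "2 \<le> X" "2 \<le> n"
    and "\<delta> = inverse (sqrt (sqrt X)) + 8 * (real t2 / (\<alpha> * real n ^ 2))"
  shows "0 < \<delta>" "t1 \<le> t2" "real t2 \<le> \<delta>/2 * \<alpha> * real (n choose 2)"
    "exp (- \<alpha> * (real t2 - real t1) * \<delta>^2 / 32) \<le> exp (- sqrt X / 32)"
proof -
  define d where "d = inverse (sqrt (sqrt X))"
  define \<eta> where "\<eta> = real t2 / (\<alpha> * real n ^ 2)"
  have X: "0 < X" using assms(3) by simp
  have d: "0 < d" using X by (simp add: d_def)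
  have \<eta>: "0 \<le> \<eta>" using assms(1) by (simp add: \<eta>_def)
  have \<delta>: "\<delta> = d + 8 * \<eta>" by (simp add: assms(5) d_def \<eta>_def)
  show "0 < \<delta>" using d \<eta> \<delta> by simp
  have "0 < real t2 - real t1" using X assms(1,2) by (simp add: zero_less_mult_iff)
  then show "t1 \<le> t2" by simp
  have "real t2 = \<eta> * \<alpha> * real n ^ 2" using assms(1,4) by (simp add: \<eta>_def)
  also have "\<dots> \<le> 4 * \<eta> * \<alpha> * real (n choose 2)"
    using choose_two_ge_square[OF assms(4)] \<eta> assms(1) by (simp add: mult_left_mono field_simps)
  also have "\<dots> \<le> \<delta>/2 * \<alpha> * real (n choose 2)"
    using \<delta> d assms(1) by (intro mult_right_mono) auto
  finally show "real t2 \<le> \<delta>/2 * \<alpha> * real (n choose 2)" .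
  have "inverse (sqrt X) = d^2" using X by (simp add: d_def power_inverse)
  also have "\<dots> \<le> \<delta>^2" using \<delta> d \<eta> by (intro power_mono) auto
  finally have "X * inverse (sqrt X) \<le> X * \<delta>^2" using X by (intro mult_left_mono) auto
  moreover have "X * inverse (sqrt X) = sqrt X" using X by (metis divide_inverse real_div_sqrt less_imp_le)
  ultimately show "exp (- \<alpha> * (real t2 - real t1) * \<delta>^2 / 32) \<le> exp (- sqrt X / 32)"
    using assms(2) by simp
qed

lemma exists_deviation_sequence:
  fixes t1 t2 :: "nat \<Rightarrow> nat" and \<alpha> :: "nat \<Rightarrow> real"
  assumes "\<forall>n. 0 < \<alpha> n" "filterlim (\<lambda>n. \<alpha> n * (real (t2 n) - real (t1 n))) at_top sequentially"
    and "(\<lambda>n. real (t2 n) / (\<alpha> n * real n ^ 2)) \<longlonglongrightarrow> 0"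
  obtains \<delta> where "\<delta> \<longlonglongrightarrow> 0"
    and "(\<lambda>n. exp (- \<alpha> n * (real (t2 n) - real (t1 n)) * \<delta> n ^ 2 / 32)) \<longlonglongrightarrow> 0"
    and "\<forall>\<^sub>F n in sequentially.
      0 < \<delta> n \<and> \<delta> n \<le> 1 \<and> t1 n \<le> t2 n \<and> real (t2 n) \<le> \<delta> n / 2 * \<alpha> n * real (n choose 2)"
proof -
  define X where "X n = \<alpha> n * (real (t2 n) - real (t1 n))" for n
  define \<delta> where "\<delta> n = inverse (sqrt (sqrt (X n))) + 8 * (real (t2 n) / (\<alpha> n * real n ^ 2))" for n
  have sqrt_X: "filterlim (\<lambda>n. sqrt (X n)) at_top sequentially"
    using filterlim_compose[OF sqrt_at_top assms(2)] by (simp add: X_def)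
  have "(\<lambda>n. inverse (sqrt (sqrt (X n)))) \<longlonglongrightarrow> 0"
    by (rule tendsto_inverse_0_at_top[OF filterlim_compose[OF sqrt_at_top sqrt_X]])
  then have \<delta>_lim: "\<delta> \<longlonglongrightarrow> 0"
    unfolding \<delta>_def using tendsto_add[OF _ tendsto_mult[OF tendsto_const[of 8] assms(3)]] by simp
  have "\<forall>\<^sub>F n in sequentially. 2 \<le> X n \<and> 2 \<le> n \<and> \<delta> n < 1"
    using assms(2)[unfolded filterlim_at_top, rule_format, of 2] order_tendstoD(2)[OF \<delta>_lim, of 1]
    by (intro eventually_conj eventually_ge_at_top) (simp_all add: X_def)
  then have ev: "\<forall>\<^sub>F n in sequentially.
      (0 < \<delta> n \<and> \<delta> n \<le> 1 \<and> t1 n \<le> t2 n \<and> real (t2 n) \<le> \<delta> n / 2 * \<alpha> n * real (n choose 2))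
      \<and> exp (- \<alpha> n * (real (t2 n) - real (t1 n)) * \<delta> n ^ 2 / 32) \<le> exp (- sqrt (X n) / 32)"
    by (rule eventually_mono)
      (use deviation_bounds[OF assms(1)[rule_format] X_def _ _ \<delta>_def] in auto)
  have "((\<lambda>y::real. exp (- y / 32)) \<longlongrightarrow> 0) at_top" by real_asymp
  from filterlim_compose[OF this sqrt_X]
  have "(\<lambda>n. exp (- \<alpha> n * (real (t2 n) - real (t1 n)) * \<delta> n ^ 2 / 32)) \<longlonglongrightarrow> 0"
  proof (rule tendsto_sandwich[OF _ _ tendsto_const, rotated 2])
    show "\<forall>\<^sub>F n in sequentially. exp (- \<alpha> n * (real (t2 n) - real (t1 n)) * \<delta> n ^ 2 / 32)
        \<le> exp (- sqrt (X n) / 32)"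
      using ev by (rule eventually_mono) blast
  qed simp
  moreover have "\<forall>\<^sub>F n in sequentially.
      0 < \<delta> n \<and> \<delta> n \<le> 1 \<and> t1 n \<le> t2 n \<and> real (t2 n) \<le> \<delta> n / 2 * \<alpha> n * real (n choose 2)"
    using ev by (rule eventually_mono) blast
  ultimately show ?thesis by (rule that[OF \<delta>_lim])
qed

theorem mainTheorem10:
  fixes P :: "graph set" and t1 t2 :: "nat \<Rightarrow> nat" and \<alpha> :: "nat \<Rightarrow> real"
  assumes "admissible_class P"
    and "\<forall>\<^sub>F n in sequentially. t1 n \<in> {1..n choose 2} \<and> t2 n \<in> {1..n choose 2}"
    and "\<forall>n. \<alpha> n > 0"
    and "filterlim (\<lambda>n. \<alpha> n * (real (t2 n) - real (t1 n))) at_top sequentially"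
    and "(\<lambda>n. real (t2 n) / (\<alpha> n * real n ^ 2)) \<longlonglongrightarrow> 0"
  shows "(whp (\<lambda>n xs. real (rej P n xs (t2 n)) - real (rej P n xs (t1 n))
                       \<le> \<alpha> n * (real (t2 n) - real (t1 n)))
          \<longrightarrow> (\<exists>\<epsilon>. \<epsilon> \<longlonglongrightarrow> 0 \<and>
                 whp (\<lambda>n xs. real (forb P n (proc P n xs (t1 n)))
                               \<le> (1 + \<epsilon> n) * \<alpha> n * real (n choose 2))))
       \<and> (whp (\<lambda>n xs. real (rej P n xs (t2 n)) - real (rej P n xs (t1 n))
                       \<ge> \<alpha> n * (real (t2 n) - real (t1 n)))
          \<longrightarrow> (\<exists>\<epsilon>. \<epsilon> \<longlonglongrightarrow> 0 \<and>
                 whp (\<lambda>n xs. real (forb P n (proc P n xs (t2 n)))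
                               \<ge> (1 + \<epsilon> n) * \<alpha> n * real (n choose 2))))"
proof -
  obtain \<delta> where \<delta>: "\<delta> \<longlonglongrightarrow> 0"
    and tail: "(\<lambda>n. exp (- \<alpha> n * (real (t2 n) - real (t1 n)) * \<delta> n ^ 2 / 32)) \<longlonglongrightarrow> 0"
    and ev\<delta>: "\<forall>\<^sub>F n in sequentially.
      0 < \<delta> n \<and> \<delta> n \<le> 1 \<and> t1 n \<le> t2 n \<and> real (t2 n) \<le> \<delta> n / 2 * \<alpha> n * real (n choose 2)"
    by (rule exists_deviation_sequence[OF assms(3-5)])
  have ev: "\<forall>\<^sub>F n in sequentially. 0 < \<delta> n \<and> \<delta> n \<le> 1 \<and> t1 n \<le> t2 n
      \<and> real (t2 n) \<le> \<delta> n / 2 * \<alpha> n * real (n choose 2) \<and> t2 n \<le> n choose 2"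
    using eventually_conj[OF ev\<delta> assms(2)] by (rule eventually_mono) auto
  show ?thesis
  proof (intro conjI impI)
    assume "whp (\<lambda>n xs. real (rej P n xs (t2 n)) - real (rej P n xs (t1 n))
                       \<le> \<alpha> n * (real (t2 n) - real (t1 n)))"
    then have "whp (\<lambda>n xs. real (forb P n (proc P n xs (t1 n))) \<le> (1 + \<delta> n) * \<alpha> n * real (n choose 2))"
      by (rule whp_if_exceptions_vanish[OF _ tail eventually_mono[OF ev]])
        (use prob_few_rejections_many_forbidden[OF assms(1) assms(3)[rule_format]] in auto)
    with \<delta> show "\<exists>\<epsilon>. \<epsilon> \<longlonglongrightarrow> 0 \<and> whp (\<lambda>n xs. real (forb P n (proc P n xs (t1 n)))
                               \<le> (1 + \<epsilon> n) * \<alpha> n * real (n choose 2))" by blast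
  next
    assume "whp (\<lambda>n xs. real (rej P n xs (t2 n)) - real (rej P n xs (t1 n))
                       \<ge> \<alpha> n * (real (t2 n) - real (t1 n)))"
    then have "whp (\<lambda>n xs. real (forb P n (proc P n xs (t2 n))) \<ge> (1 + - \<delta> n) * \<alpha> n * real (n choose 2))"
      by (rule whp_if_exceptions_vanish[OF _ tail eventually_mono[OF ev]])
        (use prob_many_rejections_few_forbidden[OF assms(1) assms(3)[rule_format]] in auto)
    moreover have "(\<lambda>n. - \<delta> n) \<longlonglongrightarrow> 0" using tendsto_minus[OF \<delta>] by simp
    ultimately show "\<exists>\<epsilon>. \<epsilon> \<longlonglongrightarrow> 0 \<and> whp (\<lambda>n xs. real (forb P n (proc P n xs (t2 n)))
                               \<ge> (1 + \<epsilon> n) * \<alpha> n * real (n choose 2))" by blast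
  qed
qed

end
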